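(* Let $S$ be an inductive left $E$-monoid. Then $E$ is a maximal right pre-reduced subset of $E(S)$ if and only if $Rest(E,S)$ has precisely enough large idempotents. If moreover $S$ is integral with zero and $0\in E$, then $E$ is maximal right pre-reduced if and only if $Rest_0(E,S)$ has precisely enough large idempotents.
   Context: For a semigroup $S$, $E(S)$ is its set of idempotents; for $e,f\in E(S)$, $e\le_r f$ iff $e=ef$, and $e\sim_r f$ iff $e\le_r f$ and $f\le_r e$. $E\subseteq E(S)$ is right pre-reduced if $e=ef$ and $f=fe$ imply $e=f$ for $e,f\in E$; it is maximal right pre-reduced if it contains exactly one element of each $\sim_r$-class of $E(S)$. A monoid with zero is integral if $st=0$ implies $s=0$ or $t=0$. Let $S$ be a monoid and $1\in E\subseteq E(S)$. $S$ is an inductive left $E$-monoid if $E$ is right pre-reduced, $(E,\le_r)$ is a meet-semilattice with meet $\wedge$, and (I1') for all $t\in S$, $e\in E$ there is $t\cdot e\in E$ such that for all $s\in S$: $ste=st$ iff $s(t\cdot e)=s$; (I2') for $s\in S$, $e,f\in E$: $se=sf=s$ implies $s(e\wedge f)=s$. $Rest(E,S)$ is $C_E(S)=\{(e,s)\in E\times S\mid es=s\}$ with $(e,s)(f,t)=(e\wedge(s\cdot f),(e\wedge(s\cdot f))st)$ and $D((e,s))=(e,e)$; if $S$ is integral with zero and $0\in E$, $Rest_0(E,S)$ is the subset $C^0_E(S)=\{(e,s)\in C_E(S)\mid s=0\Rightarrow e=0\}$ with the same operations. A left restriction semigroup is a semigroup with unary $D$ satisfying $D(x)x=x$, $D(x)D(y)=D(y)D(x)$,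 $D(D(x)y)=D(x)D(y)$, $xD(y)=D(xy)x$. For a left restriction monoid $M$, $M_1=\{s\in M\mid D(s)=1\}$; a zero of $M$ is a semigroup zero $0$ with $D(0)=0$. $M$ has enough large idempotents if for every $e\in D(M)$ other than a zero of $M$ there is $f\in E(M_1)$ with $e\sim_r f$; it has precisely enough large idempotents if in addition for every $f\in E(M_1)$ there is $e\in D(M)$ with $e\sim_r f$. *)

theory Defs
  imports Main
begin

definition idems :: "'a::monoid_mult set" where
  "idems = {x. x * x = x}"

definition le_r :: "'a::monoid_mult \<Rightarrow> 'a \<Rightarrow> bool" where
  "le_r e f \<longleftrightarrow> e = e * f"

definition sim_r :: "'a::monoid_mult \<Rightarrow> 'a \<Rightarrow> bool" where
  "sim_r e f \<longleftrightarrow> le_r e f \<and> le_r f e"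

definition right_pre_reduced :: "'a::monoid_mult set \<Rightarrow> bool" where
  "right_pre_reduced E \<longleftrightarrow> E \<subseteq> idems \<and>
     (\<forall>e\<in>E. \<forall>f\<in>E. e = e * f \<and> f = f * e \<longrightarrow> e = f)"

definition max_right_pre_reduced :: "'a::monoid_mult set \<Rightarrow> bool" where
  "max_right_pre_reduced E \<longleftrightarrow> E \<subseteq> idems \<and>
     (\<forall>e\<in>idems. \<exists>!f. f \<in> E \<and> sim_r e f)"

text \<open>meet is the meet of (E, le_r); dot t e is the element t . e of (I1').\<close>
definition inductive_left_E_monoid ::
  "'a::monoid_mult set \<Rightarrow> ('a \<Rightarrow> 'a \<Rightarrow> 'a) \<Rightarrow> ('a \<Rightarrow> 'a \<Rightarrow> 'a) \<Rightarrow> bool" where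
  "inductive_left_E_monoid E meet dot \<longleftrightarrow>
     1 \<in> E \<and> E \<subseteq> idems \<and> right_pre_reduced E \<and>
     (\<forall>e\<in>E. \<forall>f\<in>E. meet e f \<in> E \<and> le_r (meet e f) e \<and> le_r (meet e f) f \<and>
        (\<forall>g\<in>E. le_r g e \<and> le_r g f \<longrightarrow> le_r g (meet e f))) \<and>
     (\<forall>t. \<forall>e\<in>E. dot t e \<in> E \<and> (\<forall>s. s * t * e = s * t \<longleftrightarrow> s * dot t e = s)) \<and>
     (\<forall>s. \<forall>e\<in>E. \<forall>f\<in>E. s * e = s \<and> s * f = s \<longrightarrow> s * meet e f = s)"

definition rest_carrier :: "'a::monoid_mult set \<Rightarrow> ('a \<times> 'a) set" where
  "rest_carrier E = {(e, s). e \<in> E \<and> e * s = s}"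

definition rest_carrier0 :: "'a::monoid_mult set \<Rightarrow> 'a \<Rightarrow> ('a \<times> 'a) set" where
  "rest_carrier0 E z = {(e, s). (e, s) \<in> rest_carrier E \<and> (s = z \<longrightarrow> e = z)}"

definition rest_mult ::
  "('a::monoid_mult \<Rightarrow> 'a \<Rightarrow> 'a) \<Rightarrow> ('a \<Rightarrow> 'a \<Rightarrow> 'a) \<Rightarrow> 'a \<times> 'a \<Rightarrow> 'a \<times> 'a \<Rightarrow> 'a \<times> 'a" where
  "rest_mult meet dot x y =
     (let g = meet (fst x) (dot (snd x) (fst y)) in (g, g * snd x * snd y))"

definition rest_D :: "'a \<times> 'a \<Rightarrow> 'a \<times> 'a" where
  "rest_D x = (fst x, fst x)"

definition is_zero_of :: "'a::monoid_mult \<Rightarrow> bool" where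
  "is_zero_of z \<longleftrightarrow> (\<forall>x. z * x = z \<and> x * z = z)"

definition integral_with_zero :: "'a::monoid_mult \<Rightarrow> bool" where
  "integral_with_zero z \<longleftrightarrow> is_zero_of z \<and> (\<forall>s t. s * t = z \<longrightarrow> s = z \<or> t = z)"

definition lr_zero :: "'b set \<Rightarrow> ('b \<Rightarrow> 'b \<Rightarrow> 'b) \<Rightarrow> ('b \<Rightarrow> 'b) \<Rightarrow> 'b \<Rightarrow> bool" where
  "lr_zero M mult D z \<longleftrightarrow> z \<in> M \<and> (\<forall>x\<in>M. mult z x = z \<and> mult x z = z) \<and> D z = z"

definition sim_r_in :: "('b \<Rightarrow> 'b \<Rightarrow> 'b) \<Rightarrow> 'b \<Rightarrow> 'b \<Rightarrow> bool" where
  "sim_r_in mult e f \<longleftrightarrow> e = mult e f \<and> f = mult f e"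

definition large_idems :: "'b set \<Rightarrow> ('b \<Rightarrow> 'b \<Rightarrow> 'b) \<Rightarrow> ('b \<Rightarrow> 'b) \<Rightarrow> 'b \<Rightarrow> 'b set" where
  "large_idems M mult D one = {s \<in> M. D s = one \<and> mult s s = s}"

definition enough_large_idems ::
  "'b set \<Rightarrow> ('b \<Rightarrow> 'b \<Rightarrow> 'b) \<Rightarrow> ('b \<Rightarrow> 'b) \<Rightarrow> 'b \<Rightarrow> bool" where
  "enough_large_idems M mult D one \<longleftrightarrow>
     (\<forall>e\<in>D ` M. \<not> lr_zero M mult D e \<longrightarrow>
        (\<exists>f\<in>large_idems M mult D one. sim_r_in mult e f))"

definition precisely_enough_large_idems ::
  "'b set \<Rightarrow> ('b \<Rightarrow> 'b \<Rightarrow> 'b) \<Rightarrow> ('b \<Rightarrow> 'b) \<Rightarrow> 'b \<Rightarrow> bool" where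
  "precisely_enough_large_idems M mult D one \<longleftrightarrow>
     enough_large_idems M mult D one \<and>
     (\<forall>f\<in>large_idems M mult D one. \<exists>e\<in>D ` M. sim_r_in mult e f)"

end

theory Submission
  imports Defs
begin

text \<open>In Rest(E,S) the projections D(x) are exactly the diagonal pairs (e,e) with e in E, the
  large idempotents are the pairs (1,f) with f an idempotent of S (f \<noteq> 0 in Rest_0), and by
  axiom (I1') the pair (e,e) is ~r-related to (1,f) iff e ~r f in S. So (e,e) ~r (1,e) always
  gives enough large idempotents, and "precisely enough" says that every idempotent of S is
  ~r-related to an element of E, which for a right pre-reduced E is maximality. In Rest_0
  the only exceptions are (0,0), which is the zero, and the idempotent 0 itself, which lies in E.\<close>

lemma sim_r_sym: "sim_r e f \<Longrightarrow> sim_r f e"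
  by (simp add: sim_r_def)

lemma sim_r_trans: "sim_r e f \<Longrightarrow> sim_r f g \<Longrightarrow> sim_r e g"
  unfolding sim_r_def le_r_def by (metis mult.assoc)

lemma max_right_pre_reduced_iff:
  assumes "right_pre_reduced E"
  shows "max_right_pre_reduced E \<longleftrightarrow> (\<forall>f\<in>idems. \<exists>e\<in>E. sim_r e f)"
proof
  assume "max_right_pre_reduced E"
  then show "\<forall>f\<in>idems. \<exists>e\<in>E. sim_r e f"
    unfolding max_right_pre_reduced_def by (meson sim_r_sym)
next
  assume covers: "\<forall>f\<in>idems. \<exists>e\<in>E. sim_r e f"
  have unique: "g = g'" if "g \<in> E" "g' \<in> E" "sim_r g g'" for g g'
    using assms that unfolding right_pre_reduced_def sim_r_def le_r_def by blast
  have "\<exists>!g. g \<in> E \<and> sim_r f g" if "f \<in> idems" for f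
    using covers that unique by (meson sim_r_sym sim_r_trans)
  then show "max_right_pre_reduced E"
    using assms by (simp add: max_right_pre_reduced_def right_pre_reduced_def)
qed

lemma ilm_one_mem: "inductive_left_E_monoid E meet dot \<Longrightarrow> 1 \<in> E"
  by (simp add: inductive_left_E_monoid_def)

lemma ilm_idem: "inductive_left_E_monoid E meet dot \<Longrightarrow> e \<in> E \<Longrightarrow> e * e = e"
  by (auto simp: inductive_left_E_monoid_def idems_def)

lemma ilm_right_pre_reduced: "inductive_left_E_monoid E meet dot \<Longrightarrow> right_pre_reduced E"
  by (simp add: inductive_left_E_monoid_def)

lemma ilm_antisym:
  "inductive_left_E_monoid E meet dot \<Longrightarrow> e \<in> E \<Longrightarrow> f \<in> E \<Longrightarrow> le_r e f \<Longrightarrow> le_r f e \<Longrightarrow> e = f"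
  by (auto simp: inductive_left_E_monoid_def right_pre_reduced_def le_r_def)

lemma ilm_meet:
  assumes "inductive_left_E_monoid E meet dot" "e \<in> E" "f \<in> E"
  shows "meet e f \<in> E" "le_r (meet e f) e" "le_r (meet e f) f"
    and "g \<in> E \<Longrightarrow> le_r g e \<Longrightarrow> le_r g f \<Longrightarrow> le_r g (meet e f)"
  using assms by (auto simp: inductive_left_E_monoid_def)

lemma ilm_dot:
  assumes "inductive_left_E_monoid E meet dot" "e \<in> E"
  shows "dot t e \<in> E" and "s * t * e = s * t \<longleftrightarrow> s * dot t e = s"
  using assms by (auto simp: inductive_left_E_monoid_def)

lemma meet_one_left:
  assumes A: "inductive_left_E_monoid E meet dot" and e: "e \<in> E"
  shows "meet 1 e = e"
proof (rule ilm_antisym[OF A])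
  show "le_r e (meet 1 e)"
    using ilm_meet[OF A ilm_one_mem[OF A] e] e ilm_idem[OF A e] by (simp add: le_r_def)
qed (use ilm_meet[OF A ilm_one_mem[OF A] e] e in auto)

lemma meet_one_right:
  assumes A: "inductive_left_E_monoid E meet dot" and e: "e \<in> E"
  shows "meet e 1 = e"
proof (rule ilm_antisym[OF A])
  show "le_r e (meet e 1)"
    using ilm_meet[OF A e ilm_one_mem[OF A]] e ilm_idem[OF A e] by (simp add: le_r_def)
qed (use ilm_meet[OF A e ilm_one_mem[OF A]] e in auto)

lemma dot_eq_one_iff:
  assumes A: "inductive_left_E_monoid E meet dot" and e: "e \<in> E"
  shows "dot t e = 1 \<longleftrightarrow> t * e = t"
  using ilm_dot(2)[OF A e, of 1 t] ilm_dot(2)[OF A e, of _ t]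
  by (metis mult_1 mult_1_right mult.assoc)

lemma dot_one: "inductive_left_E_monoid E meet dot \<Longrightarrow> dot t 1 = 1"
  using dot_eq_one_iff ilm_one_mem by fastforce

lemma rest_mult_one:
  "inductive_left_E_monoid E meet dot \<Longrightarrow> rest_mult meet dot (1, s) (1, t) = (1, s * t)"
  by (simp add: rest_mult_def dot_one meet_one_left ilm_one_mem)

lemma sim_r_in_rest_iff:
  assumes A: "inductive_left_E_monoid E meet dot" and e: "e \<in> E"
  shows "sim_r_in (rest_mult meet dot) (e, e) (1, f) \<longleftrightarrow> sim_r e f"
proof -
  have "rest_mult meet dot (e, e) (1, f) = (e, e * f)"
    using ilm_idem[OF A e]
    by (simp add: rest_mult_def dot_one[OF A] meet_one_right[OF A e] mult.assoc[symmetric])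
  moreover have "rest_mult meet dot (1, f) (e, e) = (dot f e, dot f e * f * e)"
    by (simp add: rest_mult_def Let_def meet_one_left[OF A ilm_dot(1)[OF A e]])
  ultimately show ?thesis
    unfolding sim_r_in_def sim_r_def le_r_def using dot_eq_one_iff[OF A e, of f] by auto
qed

lemma sim_r_in_rest_diag:
  "inductive_left_E_monoid E meet dot \<Longrightarrow> e \<in> E \<Longrightarrow> sim_r_in (rest_mult meet dot) (e, e) (1, e)"
  using sim_r_in_rest_iff ilm_idem by (fastforce simp: sim_r_def le_r_def)

lemma rest_D_image:
  assumes "(\<lambda>e. (e, e)) ` E \<subseteq> C" "C \<subseteq> rest_carrier E"
  shows "rest_D ` C = (\<lambda>e. (e, e)) ` E"
  using assms by (force simp: rest_D_def rest_carrier_def)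

lemma rest_D_image_rest_carrier:
  "inductive_left_E_monoid E meet dot \<Longrightarrow> rest_D ` rest_carrier E = (\<lambda>e. (e, e)) ` E"
  by (rule rest_D_image) (auto simp: rest_carrier_def ilm_idem)

lemma rest_D_image_rest_carrier0:
  "inductive_left_E_monoid E meet dot \<Longrightarrow> rest_D ` rest_carrier0 E z = (\<lambda>e. (e, e)) ` E"
  by (rule rest_D_image) (auto simp: rest_carrier0_def rest_carrier_def ilm_idem)

lemma large_idems_rest_carrier:
  "inductive_left_E_monoid E meet dot \<Longrightarrow>
   large_idems (rest_carrier E) (rest_mult meet dot) rest_D (1, 1) = {(1, f) | f. f \<in> idems}"
  by (auto simp: large_idems_def rest_carrier_def rest_D_def rest_mult_one idems_def ilm_one_mem)

lemma large_idems_rest_carrier0: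
  "inductive_left_E_monoid E meet dot \<Longrightarrow>
   large_idems (rest_carrier0 E z) (rest_mult meet dot) rest_D (1, 1) =
     {(1, f) | f. f \<in> idems \<and> (f = z \<longrightarrow> 1 = z)}"
  by (auto simp: large_idems_def rest_carrier0_def rest_carrier_def rest_D_def rest_mult_one
      idems_def ilm_one_mem)

lemma rest_carrier0_zero:
  assumes A: "inductive_left_E_monoid E meet dot" and Z: "integral_with_zero z" and zE: "z \<in> E"
  shows "lr_zero (rest_carrier0 E z) (rest_mult meet dot) rest_D (z, z)"
proof -
  have zl: "z * x = z" and zr: "x * z = z" for x
    using Z by (auto simp: integral_with_zero_def is_zero_of_def)
  have dot_z: "dot z f = 1" if "f \<in> E" for f
    using dot_eq_one_iff[OF A that] zl by blast
  have meet_z: "meet f z = z" if "f \<in> E" for f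
    using ilm_meet(3)[OF A that zE] zr by (simp add: le_r_def)
  have dot_to_z: "dot t z = z" if "t \<noteq> z" for t
  proof -
    let ?d = "dot t z"
    have "?d * t * z = ?d * t"
      using ilm_dot[OF A zE] ilm_idem[OF A ilm_dot(1)[OF A zE]] by blast
    then have "?d * t = z"
      by (simp add: zr mult.assoc)
    then show ?thesis
      using Z that by (auto simp: integral_with_zero_def)
  qed
  have "rest_mult meet dot (z, z) x = (z, z) \<and> rest_mult meet dot x (z, z) = (z, z)"
    if "x \<in> rest_carrier0 E z" for x
    using that zE
    by (cases "snd x = z")
      (auto simp: rest_carrier0_def rest_carrier_def rest_mult_def dot_z meet_z dot_to_z
        meet_one_right[OF A zE] zl zr)
  then show ?thesis
    using zE by (auto simp: lr_zero_def rest_carrier0_def rest_carrier_def rest_D_def zl)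
qed

lemma precisely_enough_large_idems_rest_iff:
  assumes A: "inductive_left_E_monoid E meet dot"
    and D_image: "rest_D ` C = (\<lambda>e. (e, e)) ` E"
    and large: "large_idems C (rest_mult meet dot) rest_D (1, 1) = {(1, f) | f. f \<in> F}"
    and diag_large: "\<And>e. e \<in> E \<Longrightarrow> \<not> lr_zero C (rest_mult meet dot) rest_D (e, e) \<Longrightarrow> e \<in> F"
  shows "precisely_enough_large_idems C (rest_mult meet dot) rest_D (1, 1) \<longleftrightarrow>
           (\<forall>f\<in>F. \<exists>e\<in>E. sim_r e f)"
proof -
  have "enough_large_idems C (rest_mult meet dot) rest_D (1, 1)"
    unfolding enough_large_idems_def D_image large
    using diag_large sim_r_in_rest_diag[OF A] by blast
  then show ?thesis
    unfolding precisely_enough_large_idems_def D_image large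
    using sim_r_in_rest_iff[OF A] by blast
qed

theorem proposition4p4:
  fixes E :: "'a::monoid_mult set"
    and meet dot :: "'a \<Rightarrow> 'a \<Rightarrow> 'a"
  assumes "inductive_left_E_monoid E meet dot"
  shows "(max_right_pre_reduced E \<longleftrightarrow>
           precisely_enough_large_idems (rest_carrier E) (rest_mult meet dot) rest_D (1, 1)) \<and>
         (\<forall>z. integral_with_zero z \<and> z \<in> E \<longrightarrow>
           (max_right_pre_reduced E \<longleftrightarrow>
            precisely_enough_large_idems (rest_carrier0 E z) (rest_mult meet dot) rest_D (1, 1)))"
proof -
  note A = assms
  have max_iff: "max_right_pre_reduced E \<longleftrightarrow> (\<forall>f\<in>idems. \<exists>e\<in>E. sim_r e f)"
    using max_right_pre_reduced_iff ilm_right_pre_reduced[OF A] by blast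
  have Rest: "precisely_enough_large_idems (rest_carrier E) (rest_mult meet dot) rest_D (1, 1)
      \<longleftrightarrow> (\<forall>f\<in>idems. \<exists>e\<in>E. sim_r e f)"
    by (rule precisely_enough_large_idems_rest_iff[OF A rest_D_image_rest_carrier[OF A]
          large_idems_rest_carrier[OF A]]) (auto simp: idems_def ilm_idem[OF A])
  have Rest0: "precisely_enough_large_idems (rest_carrier0 E z) (rest_mult meet dot) rest_D (1, 1)
      \<longleftrightarrow> (\<forall>f\<in>idems. \<exists>e\<in>E. sim_r e f)"
    if Z: "integral_with_zero z" and zE: "z \<in> E" for z
  proof -
    have "precisely_enough_large_idems (rest_carrier0 E z) (rest_mult meet dot) rest_D (1, 1)
        \<longleftrightarrow> (\<forall>f\<in>{f \<in> idems. f = z \<longrightarrow> 1 = z}. \<exists>e\<in>E. sim_r e f)"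
      by (rule precisely_enough_large_idems_rest_iff[OF A rest_D_image_rest_carrier0[OF A]])
        (use large_idems_rest_carrier0[OF A] rest_carrier0_zero[OF A Z zE] in
          \<open>auto simp: idems_def ilm_idem[OF A]\<close>)
    moreover have "sim_r z z"
      using ilm_idem[OF A zE] by (simp add: sim_r_def le_r_def)
    ultimately show ?thesis
      using zE by blast
  qed
  show ?thesis
    using max_iff Rest Rest0 by blast
qed

end
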